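(* Let $m\ge1$ and $0<h<2^m$. Then the sets $\mathbb{V}_k(h)$, $k\in\mathbb{Z}^m$, are pairwise disjoint; $\mathbb{V}(h)=\bigcup_{k\in\mathbb{Z}^m}\mathbb{V}_k(h)$; $\mathbb{V}_0(h)$ is compact; $\mathbb{V}_0(h)$ is strictly convex; and $\mathbb{V}_0(h)$ has nonempty interior in $\mathbb{R}^m$. Moreover, $\mathbb{V}_0(h)=\mathbb{V}(h)\cap(0,2\pi)^m$.
   Context: $s(t)=2\sin(t/2)$. For $h\ge0$, $\mathbb{V}(h)=\{x\in\mathbb{R}^m:|\prod_{j=1}^m s(x_j)|\ge h\}$, $\mathbb{V}_0(h)=\mathbb{V}(h)\cap[0,2\pi]^m$, and for $k\in\mathbb{Z}^m$, $\mathbb{V}_k(h)=\mathbb{V}_0(h)+2\pi k=\{x+2\pi k:x\in\mathbb{V}_0(h)\}$. A set is strictly convex if for any two distinct points of it, their midpoint (indeed every point of the open segment between them) is an interior point of the set. *)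

theory Defs
  imports "HOL-Analysis.Analysis"
begin

definition s_fun :: "real \<Rightarrow> real" where
  "s_fun t = 2 * sin (t / 2)"

text \<open>Points of R^m are modelled as real^'n with CARD('n) = m.\<close>

definition VV :: "real \<Rightarrow> (real ^ 'n::finite) set" where
  "VV h = {x. \<bar>\<Prod>j\<in>UNIV. s_fun (x $ j)\<bar> \<ge> h}"

definition VV0 :: "real \<Rightarrow> (real ^ 'n::finite) set" where
  "VV0 h = VV h \<inter> {x. \<forall>j. 0 \<le> x $ j \<and> x $ j \<le> 2 * pi}"

definition VVk :: "real \<Rightarrow> int ^ 'n \<Rightarrow> (real ^ 'n::finite) set" where
  "VVk h k = (\<lambda>x. x + (\<chi> j. 2 * pi * of_int (k $ j))) ` VV0 h"

definition strictly_convex :: "'a::real_normed_vector set \<Rightarrow> bool" where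
  "strictly_convex S \<longleftrightarrow>
     (\<forall>x\<in>S. \<forall>y\<in>S. x \<noteq> y \<longrightarrow> open_segment x y \<subseteq> interior S)"

end

theory Submission
  imports Defs
begin

(*
  Write L(x) = sum_j ln s(x_j) on the open cell (0,2pi)^m, where s(t) = 2 sin(t/2) > 0.
  Since s vanishes at 0 and 2pi, for h > 0 the set V0(h) lies in the open cell and is
  the superlevel set {x. ln h <= L x} there.  The function ln s is concave (its derivative
  -cot(t/2)/2 increases) and satisfies the strict midpoint inequality
  s(a) s(b) = s((a+b)/2)^2 - 4 sin((a-b)/4)^2 < s((a+b)/2)^2, hence is strictly concave;
  so L is strictly concave, and V0(h) is strictly convex.  The centre (pi,...,pi), where
  the product is 2^m > h, lies in the open set {x in cell. ln h < L x}, inside V0(h).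
  Finally |s| is 2pi-periodic, so V(h) is the union of the lattice translates of V0(h),
  which are disjoint because V0(h) lies in the open cell; compactness is immediate.
*)

definition strictly_concave_on :: "'a::real_vector set \<Rightarrow> ('a \<Rightarrow> real) \<Rightarrow> bool" where
  "strictly_concave_on S f \<longleftrightarrow>
     (\<forall>x\<in>S. \<forall>y\<in>S. x \<noteq> y \<longrightarrow>
        (\<forall>u. 0 < u \<and> u < 1 \<longrightarrow> (1 - u) * f x + u * f y < f ((1 - u) *\<^sub>R x + u *\<^sub>R y)))"

text \<open>A concave function with a strict midpoint inequality is strictly concave: a point of
  an open segment is the midpoint of one endpoint and a suitable point of the segment.\<close>

lemma strictly_concave_onI_midpoint:
  assumes conc: "concave_on S f"
    and mid: "\<And>x y. x \<in> S \<Longrightarrow> y \<in> S \<Longrightarrow> x \<noteq> y \<Longrightarrow> f x + f y < 2 * f ((1/2) *\<^sub>R (x + y))"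
  shows "strictly_concave_on S f"
proof -
  have half: "(1 - u) * f x + u * f y < f ((1 - u) *\<^sub>R x + u *\<^sub>R y)"
    if S: "x \<in> S" "y \<in> S" and xy: "x \<noteq> y" and u: "0 < u" "u \<le> 1/2" for x y and u :: real
  proof -
    define y' where "y' = (1 - 2*u) *\<^sub>R x + (2*u) *\<^sub>R y"
    have "y' \<in> S"
      unfolding y'_def using u S concave_on_imp_convex[OF conc] by (intro convexD) auto
    have y'_ge: "(1 - 2*u) * f x + (2*u) * f y \<le> f y'"
      unfolding y'_def using u S by (intro concave_onD[OF conc]) auto
    have "x - y' = (2*u) *\<^sub>R (x - y)" unfolding y'_def by (simp add: algebra_simps)
    then have "x \<noteq> y'" using xy u by auto
    have z: "(1/2) *\<^sub>R (x + y') = (1 - u) *\<^sub>R x + u *\<^sub>R y"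
      unfolding y'_def by (simp add: algebra_simps flip: scaleR_add_left)
    have "f x + f y' < 2 * f ((1 - u) *\<^sub>R x + u *\<^sub>R y)"
      using mid[OF \<open>x \<in> S\<close> \<open>y' \<in> S\<close> \<open>x \<noteq> y'\<close>] by (simp only: z)
    then show ?thesis using y'_ge by (simp add: algebra_simps)
  qed
  show ?thesis unfolding strictly_concave_on_def
  proof (intro ballI impI allI)
    fix x y and u :: real assume "x \<in> S" "y \<in> S" "x \<noteq> y" and u: "0 < u \<and> u < 1"
    show "(1 - u) * f x + u * f y < f ((1 - u) *\<^sub>R x + u *\<^sub>R y)"
    proof (cases "u \<le> 1/2")
      case True
      then show ?thesis using half \<open>x \<in> S\<close> \<open>y \<in> S\<close> \<open>x \<noteq> y\<close> u by blast
    next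
      case False
      then have "(1 - (1 - u)) * f y + (1 - u) * f x < f ((1 - (1 - u)) *\<^sub>R y + (1 - u) *\<^sub>R x)"
        using half[of y x "1 - u"] \<open>x \<in> S\<close> \<open>y \<in> S\<close> \<open>x \<noteq> y\<close> u by auto
      then show ?thesis by (simp add: algebra_simps)
    qed
  qed
qed

text \<open>A sum of a strictly concave function applied to each coordinate is strictly concave on
  the corresponding product set: two distinct points differ in some coordinate.\<close>

lemma strictly_concave_on_coordinate_sum:
  fixes f :: "real \<Rightarrow> real"
  assumes "strictly_concave_on I f"
  shows "strictly_concave_on {x::real^'n::finite. \<forall>j. x $ j \<in> I} (\<lambda>x. \<Sum>j\<in>UNIV. f (x $ j))"
  unfolding strictly_concave_on_def
proof (intro ballI impI allI)
  fix x y :: "real^'n" and u :: real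
  assume x: "x \<in> {x. \<forall>j. x $ j \<in> I}" and y: "y \<in> {x. \<forall>j. x $ j \<in> I}"
    and "x \<noteq> y" and u: "0 < u \<and> u < 1"
  let ?z = "(1 - u) *\<^sub>R x + u *\<^sub>R y"
  have strict: "(1 - u) * f (x $ j) + u * f (y $ j) < f (?z $ j)" if "x $ j \<noteq> y $ j" for j
    using assms x y u that unfolding strictly_concave_on_def by auto
  have weak: "(1 - u) * f (x $ j) + u * f (y $ j) \<le> f (?z $ j)" for j
    by (cases "x $ j = y $ j") (auto simp: algebra_simps dest: strict)
  obtain j0 where "x $ j0 \<noteq> y $ j0" using \<open>x \<noteq> y\<close> by (auto simp: vec_eq_iff)
  then have "(\<Sum>j\<in>UNIV. (1 - u) * f (x $ j) + u * f (y $ j)) < (\<Sum>j\<in>UNIV. f (?z $ j))"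
    using weak strict by (intro sum_strict_mono_ex1) auto
  then show "(1 - u) * (\<Sum>j\<in>UNIV. f (x $ j)) + u * (\<Sum>j\<in>UNIV. f (y $ j)) < (\<Sum>j\<in>UNIV. f (?z $ j))"
    by (simp add: sum.distrib sum_distrib_left)
qed

lemma open_strict_superlevel:
  fixes f :: "'a::topological_space \<Rightarrow> real"
  assumes "open S" "continuous_on S f"
  shows "open {x\<in>S. c < f x}"
proof -
  have "{x\<in>S. c < f x} = S \<inter> f -` {c<..}" by auto
  then show ?thesis using continuous_open_preimage[OF assms(2,1) open_greaterThan] by simp
qed

text \<open>Superlevel sets of continuous strictly concave functions on open convex sets are
  strictly convex: the open segment lies in the open strict superlevel set.\<close>

lemma strictly_convex_superlevel:
  fixes f :: "'a::real_normed_vector \<Rightarrow> real"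
  assumes "open S" "convex S" "continuous_on S f" "strictly_concave_on S f"
  shows "strictly_convex {x\<in>S. c \<le> f x}"
  unfolding strictly_convex_def
proof (intro ballI impI subsetI)
  fix x y z assume x: "x \<in> {x\<in>S. c \<le> f x}" and y: "y \<in> {x\<in>S. c \<le> f x}"
    and "x \<noteq> y" and "z \<in> open_segment x y"
  then obtain u where u: "0 < u" "u < 1" and z: "z = (1 - u) *\<^sub>R x + u *\<^sub>R y"
    by (auto simp: in_segment)
  have "z \<in> S" using x y u \<open>convex S\<close> unfolding z by (intro convexD) auto
  have "(1 - u) * c + u * c \<le> (1 - u) * f x + u * f y"
    using x y u by (intro add_mono mult_left_mono) auto
  also have "\<dots> < f z"
    using assms(4) x y u \<open>x \<noteq> y\<close> unfolding strictly_concave_on_def z by auto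
  finally have "z \<in> {x\<in>S. c < f x}" using \<open>z \<in> S\<close> by (simp add: algebra_simps)
  moreover have "{x\<in>S. c < f x} \<subseteq> {x\<in>S. c \<le> f x}" by auto
  ultimately show "z \<in> interior {x\<in>S. c \<le> f x}"
    using open_strict_superlevel[OF assms(1,3)] by (meson interior_maximal subsetD)
qed

lemma s_fun_pos: "0 < t \<Longrightarrow> t < 2*pi \<Longrightarrow> 0 < s_fun t"
  unfolding s_fun_def by (intro mult_pos_pos sin_gt_zero) auto

lemma continuous_on_s_fun [continuous_intros]:
  fixes f :: "'a::t2_space \<Rightarrow> real"
  assumes "continuous_on A f"
  shows "continuous_on A (\<lambda>x. s_fun (f x))"
  unfolding s_fun_def by (intro continuous_intros assms) auto

lemma s_fun_endpoints: "s_fun 0 = 0" "s_fun (2*pi) = 0"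
  unfolding s_fun_def by auto

lemma abs_s_fun_periodic: "\<bar>s_fun (t + 2*pi * of_int k)\<bar> = \<bar>s_fun t\<bar>"
proof -
  have arg: "(t + 2*pi * of_int k) / 2 = t/2 + pi * of_int k" by (simp add: field_simps)
  show ?thesis unfolding s_fun_def arg by (simp only: sin_add) (simp add: abs_mult)
qed

text \<open>\<open>ln s\<close> is concave on \<open>(0, 2\<pi>)\<close>: its derivative \<open>cos(t/2) / (2 sin(t/2))\<close> decreases.\<close>

lemma concave_ln_s_fun: "concave_on {0<..<2*pi} (\<lambda>t. ln (s_fun t))"
  unfolding concave_on_def
proof (rule convex_on_realI[where f' = "\<lambda>t. - (cos (t/2) / (2 * sin (t/2)))"])
  fix x :: real assume "x \<in> {0<..<2*pi}"
  then have "sin (x/2) > 0" by (intro sin_gt_zero) auto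
  then show "((\<lambda>t. - ln (s_fun t)) has_real_derivative - (cos (x/2) / (2 * sin (x/2)))) (at x)"
    unfolding s_fun_def by (auto intro!: derivative_eq_intros simp: field_simps)
next
  fix x y :: real assume x: "x \<in> {0<..<2*pi}" and y: "y \<in> {0<..<2*pi}" and "x \<le> y"
  have pos: "sin (x/2) > 0" "sin (y/2) > 0" using x y by (auto intro!: sin_gt_zero)
  have "sin (y/2 - x/2) \<ge> 0" using x y \<open>x \<le> y\<close> by (intro sin_ge_zero) auto
  then have "cos (y/2) * sin (x/2) \<le> cos (x/2) * sin (y/2)"
    unfolding sin_diff by (simp add: algebra_simps)
  then show "- (cos (x/2) / (2 * sin (x/2))) \<le> - (cos (y/2) / (2 * sin (y/2)))"
    using pos by (simp add: field_simps)
qed simp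

text \<open>Strict midpoint inequality, from
  \<open>sin(c + d) sin(c - d) = sin(c)\<^sup>2 - sin(d)\<^sup>2\<close> with \<open>c = (a+b)/4\<close>, \<open>d = (a-b)/4\<close>.\<close>

lemma s_fun_midpoint:
  assumes "0 < a" "a < 2*pi" "0 < b" "b < 2*pi" "a \<noteq> b"
  shows "s_fun a * s_fun b < (s_fun ((a + b) / 2))\<^sup>2"
proof -
  define c where "c = (a + b) / 4"
  define d where "d = (a - b) / 4"
  have halves: "a/2 = c + d" "b/2 = c - d" "(a + b)/2/2 = c"
    unfolding c_def d_def by (auto simp: field_simps)
  have product: "sin (c + d) * sin (c - d) = (sin c)\<^sup>2 - (sin d)\<^sup>2"
  proof -
    have "sin (c + d) * sin (c - d) = (sin c)\<^sup>2 * (cos d)\<^sup>2 - (cos c)\<^sup>2 * (sin d)\<^sup>2"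
      unfolding sin_add sin_diff by (simp add: power2_eq_square algebra_simps)
    also have "\<dots> = (sin c)\<^sup>2 * (1 - (sin d)\<^sup>2) - (1 - (sin c)\<^sup>2) * (sin d)\<^sup>2"
      by (simp only: cos_squared_eq)
    also have "\<dots> = (sin c)\<^sup>2 - (sin d)\<^sup>2" by (simp add: algebra_simps)
    finally show ?thesis .
  qed
  have "0 < \<bar>d\<bar>" "\<bar>d\<bar> < pi" using assms unfolding d_def by auto
  then have "0 < sin \<bar>d\<bar>" by (rule sin_gt_zero)
  moreover have "(sin \<bar>d\<bar>)\<^sup>2 = (sin d)\<^sup>2" by (cases "0 \<le> d") simp_all
  ultimately have "0 < (sin d)\<^sup>2" by (metis zero_less_power)
  then have "sin (c + d) * sin (c - d) < (sin c)\<^sup>2" using product by linarith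
  then show ?thesis unfolding s_fun_def halves by (simp add: power_mult_distrib)
qed

lemma strictly_concave_ln_s_fun: "strictly_concave_on {0<..<2*pi} (\<lambda>t. ln (s_fun t))"
proof (rule strictly_concave_onI_midpoint[OF concave_ln_s_fun])
  fix a b :: real assume a: "a \<in> {0<..<2*pi}" and b: "b \<in> {0<..<2*pi}" and "a \<noteq> b"
  have pos: "0 < s_fun a" "0 < s_fun b" "0 < s_fun ((a + b) / 2)"
    using a b by (auto intro!: s_fun_pos)
  have "ln (s_fun a * s_fun b) < ln ((s_fun ((a + b) / 2))\<^sup>2)"
    using s_fun_midpoint a b \<open>a \<noteq> b\<close> pos by (subst ln_less_cancel_iff) auto
  then show "ln (s_fun a) + ln (s_fun b) < 2 * ln (s_fun ((1/2) *\<^sub>R (a + b)))"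
    using pos by (simp add: ln_mult ln_realpow)
qed

definition open_cell :: "(real ^ 'n::finite) set" where
  "open_cell = {x. \<forall>j. 0 < x $ j \<and> x $ j < 2*pi}"

definition log_prod_s :: "real ^ 'n::finite \<Rightarrow> real" where
  "log_prod_s x = (\<Sum>j\<in>UNIV. ln (s_fun (x $ j)))"

lemma open_cell_eq_box: "open_cell = box 0 (\<chi> j. 2*pi)"
  by (auto simp: open_cell_def mem_box_cart)

lemma abs_prod_s_fun_eq_exp:
  assumes "x \<in> open_cell"
  shows "\<bar>\<Prod>j\<in>UNIV. s_fun (x $ j)\<bar> = exp (log_prod_s x)"
proof -
  have pos: "0 < s_fun (x $ j)" for j using assms by (auto simp: open_cell_def intro: s_fun_pos)
  then have "0 < (\<Prod>j\<in>UNIV. s_fun (x $ j))" by (intro prod_pos) auto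
  then show ?thesis using pos by (simp add: log_prod_s_def exp_sum)
qed

lemma continuous_log_prod_s: "continuous_on (open_cell :: (real ^ 'n::finite) set) log_prod_s"
  unfolding log_prod_s_def
proof (intro continuous_intros ballI)
  fix x :: "real^'n" and j assume "x \<in> open_cell"
  then have "0 < s_fun (x $ j)" by (intro s_fun_pos) (auto simp: open_cell_def)
  then show "s_fun (x $ j) \<noteq> 0" by simp
qed

lemma strictly_concave_log_prod_s:
  "strictly_concave_on (open_cell :: (real ^ 'n::finite) set) log_prod_s"
proof -
  have cell: "open_cell = {x::real^'n. \<forall>j. x $ j \<in> {0<..<2*pi}}" by (auto simp: open_cell_def)
  show ?thesis
    unfolding cell log_prod_s_def[abs_def]
    by (rule strictly_concave_on_coordinate_sum[OF strictly_concave_ln_s_fun])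
qed

text \<open>Since \<open>s\<close> vanishes at \<open>0\<close> and \<open>2\<pi>\<close>, for \<open>h > 0\<close> the set \<open>V\<^sub>0(h)\<close> avoids the boundary
  of the closed cell; inside the open cell it is a superlevel set of \<open>log_prod_s\<close>.\<close>

lemma VV0_subset_open_cell:
  assumes "0 < h"
  shows "(VV0 h :: (real ^ 'n::finite) set) \<subseteq> open_cell"
proof
  fix x :: "real^'n" assume x: "x \<in> VV0 h"
  have "h \<le> \<bar>\<Prod>j\<in>UNIV. s_fun (x $ j)\<bar>" and box: "0 \<le> x $ j" "x $ j \<le> 2*pi" for j
    using x by (auto simp: VV0_def VV_def)
  then have "0 < \<bar>\<Prod>j\<in>UNIV. s_fun (x $ j)\<bar>" using assms by linarith
  then have nonzero: "s_fun (x $ j) \<noteq> 0" for j by auto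
  have "x $ j \<noteq> 0" "x $ j \<noteq> 2*pi" for j using nonzero[of j] s_fun_endpoints by auto
  with box have "0 < x $ j" "x $ j < 2*pi" for j
    by (simp_all add: order.not_eq_order_implies_strict)
  then show "x \<in> open_cell" by (simp add: open_cell_def)
qed

lemma VV0_eq_VV_Int_open_cell:
  assumes "0 < h"
  shows "(VV0 h :: (real ^ 'n::finite) set) = VV h \<inter> open_cell"
proof
  show "VV0 h \<subseteq> VV h \<inter> open_cell"
    using VV0_subset_open_cell[OF assms] by (auto simp: VV0_def)
  show "VV h \<inter> open_cell \<subseteq> VV0 h"
    by (auto simp: VV0_def open_cell_def intro: order.strict_implies_order)
qed

lemma VV0_eq_superlevel:
  assumes "0 < h"
  shows "(VV0 h :: (real ^ 'n::finite) set) = {x\<in>open_cell. ln h \<le> log_prod_s x}"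
proof -
  have "x \<in> VV0 h \<longleftrightarrow> x \<in> open_cell \<and> ln h \<le> log_prod_s x" for x :: "real^'n"
  proof (cases "x \<in> open_cell")
    case True
    have "h \<le> exp (log_prod_s x) \<longleftrightarrow> ln h \<le> log_prod_s x"
      by (rule exp_le_cancel_iff[of "ln h" "log_prod_s x", unfolded exp_ln[OF assms]])
    then show ?thesis
      using True by (simp add: VV0_eq_VV_Int_open_cell[OF assms] VV_def abs_prod_s_fun_eq_exp)
  qed (simp add: VV0_eq_VV_Int_open_cell[OF assms])
  then show ?thesis by blast
qed

lemma strictly_convex_VV0:
  assumes "0 < h"
  shows "strictly_convex (VV0 h)"
  unfolding VV0_eq_superlevel[OF assms]
  by (intro strictly_convex_superlevel continuous_log_prod_s strictly_concave_log_prod_s)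
     (simp_all add: open_cell_eq_box open_box)

text \<open>The centre \<open>(\<pi>, \<dots>, \<pi>)\<close> of the cell, where the product equals \<open>2\<^sup>m\<close>, is interior.\<close>

lemma centre_in_interior_VV0:
  assumes "0 < h" "h < 2 ^ CARD('n::finite)"
  shows "(\<chi> j. pi) \<in> interior (VV0 h :: (real ^ 'n) set)"
proof -
  let ?U = "{x\<in>open_cell. ln h < log_prod_s x} :: (real^'n) set"
  have "open ?U"
    by (intro open_strict_superlevel continuous_log_prod_s) (simp add: open_cell_eq_box open_box)
  moreover have "?U \<subseteq> VV0 h" using assms(1) by (auto simp: VV0_eq_superlevel)
  moreover have "(\<chi> j. pi) \<in> ?U"
  proof -
    have "(\<chi> j. pi) \<in> (open_cell :: (real^'n) set)" by (simp add: open_cell_def)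
    moreover have "log_prod_s (\<chi> j. pi :: real^'n) = ln (2 ^ CARD('n))"
      by (simp add: log_prod_s_def s_fun_def ln_realpow)
    ultimately show ?thesis using assms by simp
  qed
  ultimately show ?thesis by (meson interior_maximal subsetD)
qed

lemma compact_VV0: "compact (VV0 h :: (real ^ 'n::finite) set)"
proof -
  have "VV0 h = cbox 0 (\<chi> j. 2*pi) \<inter> (VV h :: (real^'n) set)"
    unfolding VV0_def by (auto simp: mem_box_cart)
  moreover have "closed (VV h :: (real^'n) set)"
    unfolding VV_def by (intro closed_Collect_le continuous_intros)
  ultimately show ?thesis by (simp add: compact_Int_closed)
qed

definition lattice_vec :: "int ^ 'n::finite \<Rightarrow> real ^ 'n" where
  "lattice_vec k = (\<chi> j. 2 * pi * of_int (k $ j))"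

lemma VVk_eq: "VVk h k = (\<lambda>x. x + lattice_vec k) ` VV0 h"
  by (simp add: VVk_def lattice_vec_def)

lemma VV_translate: "x + lattice_vec k \<in> VV h \<longleftrightarrow> x \<in> VV h"
  by (simp add: VV_def lattice_vec_def abs_prod abs_s_fun_periodic)

lemma lattice_translates_disjoint:
  assumes "A \<subseteq> open_cell" "k \<noteq> k'"
  shows "(\<lambda>x. x + lattice_vec k) ` A \<inter> (\<lambda>x. x + lattice_vec k') ` A = {}"
proof (rule ccontr)
  assume "(\<lambda>x. x + lattice_vec k) ` A \<inter> (\<lambda>x. x + lattice_vec k') ` A \<noteq> {}"
  then obtain x y where "x \<in> open_cell" "y \<in> open_cell"
    and eq: "x + lattice_vec k = y + lattice_vec k'" using assms(1) by blast
  have "k $ j = k' $ j" for j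
  proof -
    have "y $ j - x $ j = 2 * pi * of_int (k $ j - k' $ j)"
      using arg_cong[OF eq, of "\<lambda>v. v $ j"] by (simp add: lattice_vec_def algebra_simps)
    then have dist: "\<bar>y $ j - x $ j\<bar> = 2 * pi * of_int \<bar>k $ j - k' $ j\<bar>"
      by (simp add: abs_mult)
    have "0 < x $ j" "x $ j < 2 * pi" "0 < y $ j" "y $ j < 2 * pi"
      using \<open>x \<in> open_cell\<close> \<open>y \<in> open_cell\<close> by (auto simp: open_cell_def)
    then have "2 * pi * of_int \<bar>k $ j - k' $ j\<bar> < 2 * pi * 1" unfolding dist[symmetric] by linarith
    then have "\<bar>k $ j - k' $ j\<bar> < 1" using mult_less_cancel_left_pos[of "2 * pi"] by simp
    then show ?thesis by linarith
  qed
  then show False using assms(2) by (simp add: vec_eq_iff)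
qed

text \<open>Every point reduces modulo \<open>2\<pi>\<close>, coordinatewise, into the closed cell.\<close>

lemma VV_eq_Union_VVk: "VV h = (\<Union>k. VVk h k)"
proof
  show "VV h \<subseteq> (\<Union>k. VVk h k)"
  proof
    fix x :: "real^'n" assume x: "x \<in> VV h"
    define k where "k = (\<chi> j. \<lfloor>x $ j / (2*pi)\<rfloor>)"
    define y where "y = x - lattice_vec k"
    have y: "y $ j = 2*pi * frac (x $ j / (2*pi))" for j
      by (simp add: y_def k_def lattice_vec_def frac_def algebra_simps)
    have "0 \<le> y $ j \<and> y $ j \<le> 2*pi" for j
      unfolding y using frac_ge_0[of "x $ j / (2*pi)"] frac_lt_1[of "x $ j / (2*pi)"] by auto
    moreover have "y \<in> VV h" using x VV_translate[of y k] by (simp add: y_def)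
    ultimately have "y \<in> VV0 h" by (simp add: VV0_def)
    then have "x \<in> VVk h k" unfolding VVk_eq by (rule image_eqI[rotated]) (simp add: y_def)
    then show "x \<in> (\<Union>k. VVk h k)" by blast
  qed
  show "(\<Union>k. VVk h k) \<subseteq> VV h"
    by (auto simp: VVk_eq VV0_def VV_translate)
qed

theorem lemma5:
  fixes h :: real
  assumes "0 < h" and "h < 2 ^ CARD('n::finite)"
  shows "(\<forall>k k'::int ^ 'n. k \<noteq> k' \<longrightarrow> VVk h k \<inter> VVk h k' = {})
    \<and> (VV h :: (real ^ 'n) set) = (\<Union>k::int ^ 'n. VVk h k)
    \<and> compact (VV0 h :: (real ^ 'n) set)
    \<and> strictly_convex (VV0 h :: (real ^ 'n) set)
    \<and> interior (VV0 h :: (real ^ 'n) set) \<noteq> {}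
    \<and> (VV0 h :: (real ^ 'n) set) = VV h \<inter> {x. \<forall>j. 0 < x $ j \<and> x $ j < 2 * pi}"
proof (intro conjI allI impI)
  fix k k' :: "int^'n" assume "k \<noteq> k'"
  then show "VVk h k \<inter> VVk h k' = {}"
    unfolding VVk_eq by (rule lattice_translates_disjoint[OF VV0_subset_open_cell[OF assms(1)]])
next
  show "(VV h :: (real ^ 'n) set) = (\<Union>k. VVk h k)" by (rule VV_eq_Union_VVk)
next
  show "compact (VV0 h :: (real ^ 'n) set)" by (rule compact_VV0)
next
  show "strictly_convex (VV0 h :: (real ^ 'n) set)" by (rule strictly_convex_VV0[OF assms(1)])
next
  show "interior (VV0 h :: (real ^ 'n) set) \<noteq> {}"
    using centre_in_interior_VV0[OF assms] by blast
next
  have "open_cell = {x::real^'n. \<forall>j. 0 < x $ j \<and> x $ j < 2 * pi}" by (rule open_cell_def)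
  then show "(VV0 h :: (real ^ 'n) set) = VV h \<inter> {x. \<forall>j. 0 < x $ j \<and> x $ j < 2 * pi}"
    using VV0_eq_VV_Int_open_cell[OF assms(1)] by simp
qed

end
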